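(* Let $w$ be a capacity and $\Lambda,\Lambda_1,\Lambda_2\in\mathcal H$. Then: (i) $\Lambda\mathrm{VaR}^{w}$ and $\Lambda\mathrm{VaR}^{+,w}$ are monotone (i.e. $X\le Y$ implies $\rho(X)\le\rho(Y)$), and $\Lambda\mathrm{VaR}^{w}(X)\le \Lambda\mathrm{VaR}^{+,w}(X)$ for all $X\in\mathcal X$; (ii) if $\Lambda_1\le\Lambda_2$ pointwise, then $\Lambda_1\mathrm{VaR}^w\ge\Lambda_2\mathrm{VaR}^w$ and $\Lambda_1\mathrm{VaR}^{+,w}\ge\Lambda_2\mathrm{VaR}^{+,w}$; (iii) if $\Lambda$ is increasing, then $\Lambda\mathrm{VaR}^{w}$ and $\Lambda\mathrm{VaR}^{+,w}$ are quasi-star-shaped, i.e. $\rho(\lambda X+(1-\lambda)t)\le\max\{\rho(X),\rho(t)\}$ for all $X\in\mathcal X$, $t\in\mathbb R$, $\lambda\in[0,1]$; (iv) if $\Lambda$ is increasing, then $\Lambda\mathrm{VaR}^{w}$ and $\Lambda\mathrm{VaR}^{+,w}$ are cash-subadditive, i.e. $\rho(X+m)\le\rho(X)+m$ for all $X\in\mathcal X$, $m\ge0$; if $\Lambda$ is decreasing, they are cash-supadditive, i.e. $\rho(X+m)\ge\rho(X)+m$ for all $X\in\mathcal X$, $m\ge 0$.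
   Context: Let $(\Omega,\mathcal F)$ be a measurable space and $\mathcal X$ a set of real-valued random variables on it containing all bounded ones and closed under adding constants and affine combinations with constants. A map $w:\mathcal F\to[0,1]$ is a capacity if $w(\emptyset)=0$, $w(\Omega)=1$ and $A\subseteq B$ implies $w(A)\le w(B)$. For $\Lambda:\mathbb R\to[0,1]$ and a capacity $w$, define for $X\in\mathcal X$ $\Lambda\mathrm{VaR}^w(X)=\inf\{x\in\mathbb R: w(X>x)\le\Lambda(x)\}$ and $\Lambda\mathrm{VaR}^{+,w}(X)=\sup\{x\in\mathbb R: w(X>x)\ge\Lambda(x)\}$, with $\inf\emptyset=\infty$, $\sup\emptyset=-\infty$, where $w(X>x)=w(\{\omega:X(\omega)>x\})$. $\mathcal H$ denotes the set of all functions $\Lambda:\mathbb R\to(0,1)$. "Increasing"/"decreasing" are meant in the non-strict sense. For a constant $t$, $\rho(t)$ means $\rho$ evaluated at the constant random variable $t$. *)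

theory Defs
  imports "HOL-Analysis.Analysis"
begin

definition capacity :: "'a measure \<Rightarrow> ('a set \<Rightarrow> real) \<Rightarrow> bool" where
  "capacity M w \<longleftrightarrow>
     (\<forall>A\<in>sets M. 0 \<le> w A \<and> w A \<le> 1) \<and> w {} = 0 \<and> w (space M) = 1 \<and>
     (\<forall>A\<in>sets M. \<forall>B\<in>sets M. A \<subseteq> B \<longrightarrow> w A \<le> w B)"

definition admissible_rv_set :: "'a measure \<Rightarrow> ('a \<Rightarrow> real) set \<Rightarrow> bool" where
  "admissible_rv_set M XX \<longleftrightarrow>
     XX \<subseteq> borel_measurable M \<and>
     (\<forall>X\<in>borel_measurable M. (\<exists>B. \<forall>\<omega>\<in>space M. \<bar>X \<omega>\<bar> \<le> B) \<longrightarrow> X \<in> XX) \<and>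
     (\<forall>X\<in>XX. \<forall>c::real. (\<lambda>\<omega>. X \<omega> + c) \<in> XX) \<and>
     (\<forall>X\<in>XX. \<forall>l::real. \<forall>t::real. 0 \<le> l \<and> l \<le> 1 \<longrightarrow> (\<lambda>\<omega>. l * X \<omega> + (1 - l) * t) \<in> XX)"

definition HH :: "(real \<Rightarrow> real) set" where
  "HH = {L. \<forall>x. 0 < L x \<and> L x < 1}"

definition wgt :: "'a measure \<Rightarrow> ('a set \<Rightarrow> real) \<Rightarrow> ('a \<Rightarrow> real) \<Rightarrow> real \<Rightarrow> real" where
  "wgt M w X x = w {\<omega> \<in> space M. X \<omega> > x}"

text \<open>Lambda-VaR (lower) and Lambda-VaR^+ (upper), extended-real valued,
 with Inf {} = \<infinity> and Sup {} = -\<infinity> (as in the ereal lattice).\<close>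
definition LVaR :: "'a measure \<Rightarrow> (real \<Rightarrow> real) \<Rightarrow> ('a set \<Rightarrow> real) \<Rightarrow> ('a \<Rightarrow> real) \<Rightarrow> ereal" where
  "LVaR M L w X = Inf (ereal ` {x. wgt M w X x \<le> L x})"

definition LVaR_plus :: "'a measure \<Rightarrow> (real \<Rightarrow> real) \<Rightarrow> ('a set \<Rightarrow> real) \<Rightarrow> ('a \<Rightarrow> real) \<Rightarrow> ereal" where
  "LVaR_plus M L w X = Sup (ereal ` {x. wgt M w X x \<ge> L x})"

end

theory Submission
  imports Defs
begin

(* Both risk measures are read off where the decreasing curve x \<mapsto> w(X > x) crosses \<Lambda>, so
   monotonicity in X and in \<Lambda> are inclusions between the sets defining them.
   Adding m to X shifts both measures by m while replacing \<Lambda> by \<Lambda>(\<cdot> + m), so cash sub- and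
   supadditivity reduce to monotonicity in \<Lambda>. For quasi-star-shapedness, above t the mixture
   \<lambda>X + (1 - \<lambda>)t exceeds a level x only where X does. *)

lemma bij_add_ereal: "bij (\<lambda>e. e + ereal c)"
proof (rule o_bij[where g = "\<lambda>e. e - ereal c"])
  have "e - ereal c + ereal c = e" "e + ereal c - ereal c = e" for e
    by (cases e; simp)+
  then show "(\<lambda>e. e + ereal c) \<circ> (\<lambda>e. e - ereal c) = id"
    and "(\<lambda>e. e - ereal c) \<circ> (\<lambda>e. e + ereal c) = id"
    by (simp_all add: fun_eq_iff)
qed

lemma mono_bij_Sup:
  fixes f :: "'a::complete_linorder \<Rightarrow> 'b::complete_linorder"
  assumes "mono f" "bij f"
  shows "f (Sup A) = Sup (f ` A)"
proof (rule antisym[OF _ mono_Sup[OF assms(1)]])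
  have "Sup A = Sup (inv f ` f ` A)"
    using assms(2) by (simp add: bij_is_inj image_comp)
  also have "\<dots> \<le> inv f (Sup (f ` A))"
    using mono_Sup[OF mono_inv[OF assms]] .
  finally show "f (Sup A) \<le> Sup (f ` A)"
    using monoD[OF assms(1)] assms(2) by (metis bij_is_surj surj_f_inv_f)
qed

lemma Inf_add_ereal:
  fixes A :: "ereal set"
  shows "Inf ((\<lambda>e. e + ereal c) ` A) = Inf A + ereal c"
  by (rule mono_bij_Inf[symmetric]) (auto intro: bij_add_ereal monoI add_right_mono)

lemma Sup_add_ereal:
  fixes A :: "ereal set"
  shows "Sup ((\<lambda>e. e + ereal c) ` A) = Sup A + ereal c"
  by (rule mono_bij_Sup[symmetric]) (auto intro: bij_add_ereal monoI add_right_mono)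

lemma ereal_le_real_strict:
  fixes a b :: ereal
  assumes "\<And>x. a < ereal x \<Longrightarrow> b \<le> ereal x"
  shows "b \<le> a"
proof (rule dense_ge)
  fix e assume "a < e"
  then show "b \<le> e"
    using assms by (cases e) auto
qed

lemma HH_D: "L \<in> HH \<Longrightarrow> 0 < L x" "L \<in> HH \<Longrightarrow> L x < 1"
  by (simp_all add: HH_def)

lemma capacity_mono:
  assumes "capacity M w" "A \<in> sets M" "B \<in> sets M" "A \<subseteq> B"
  shows "w A \<le> w B"
  using assms unfolding capacity_def by blast

lemma superlevel_set_sets:
  fixes X :: "'a \<Rightarrow> real"
  assumes "X \<in> borel_measurable M"
  shows "{\<omega> \<in> space M. x < X \<omega>} \<in> sets M"
  using assms unfolding borel_measurable_iff_greater by blast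

lemma wgt_mono:
  fixes X Y :: "'a \<Rightarrow> real"
  assumes w: "capacity M w" and "X \<in> borel_measurable M" "Y \<in> borel_measurable M"
    and "\<And>\<omega>. \<omega> \<in> space M \<Longrightarrow> y < Y \<omega> \<Longrightarrow> x < X \<omega>"
  shows "wgt M w Y y \<le> wgt M w X x"
  unfolding wgt_def using assms by (intro capacity_mono[OF w] superlevel_set_sets) auto

lemma wgt_const:
  assumes "capacity M w"
  shows "wgt M w (\<lambda>\<omega>. t) x = (if x < t then 1 else 0)"
  using assms unfolding capacity_def wgt_def by auto

lemma wgt_add_const: "wgt M w (\<lambda>\<omega>. X \<omega> + m) x = wgt M w X (x - m)"
  unfolding wgt_def by (rule arg_cong[where f = w]) auto

lemma LVaR_le: "wgt M w X x \<le> L x \<Longrightarrow> LVaR M L w X \<le> ereal x"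
  unfolding LVaR_def by (auto intro: Inf_lower)

lemma LVaR_less_iff: "LVaR M L w X < ereal x \<longleftrightarrow> (\<exists>y<x. wgt M w X y \<le> L y)"
  unfolding LVaR_def by (auto simp: Inf_less_iff)

lemma le_LVaR_plus: "L x \<le> wgt M w X x \<Longrightarrow> ereal x \<le> LVaR_plus M L w X"
  unfolding LVaR_plus_def by (auto intro: Sup_upper)

lemma LVaR_le_LVaR_plus: "LVaR M L w X \<le> LVaR_plus M L w X"
proof (rule ereal_le_real_strict)
  fix x assume "LVaR_plus M L w X < ereal x"
  then have "\<not> L x \<le> wgt M w X x"
    using le_LVaR_plus by (metis not_le)
  then show "LVaR M L w X \<le> ereal x"
    by (intro LVaR_le) simp
qed

lemma LVaR_mono:
  fixes X Y :: "'a \<Rightarrow> real"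
  assumes w: "capacity M w" and X: "X \<in> borel_measurable M" and Y: "Y \<in> borel_measurable M"
    and "\<forall>\<omega>\<in>space M. X \<omega> \<le> Y \<omega>"
  shows "LVaR M L w X \<le> LVaR M L w Y"
proof -
  have "wgt M w X x \<le> wgt M w Y x" for x
    using assms by (intro wgt_mono[OF w Y X]) force
  then show ?thesis
    unfolding LVaR_def by (intro Inf_superset_mono image_mono) (auto intro: order_trans)
qed

lemma LVaR_plus_mono:
  fixes X Y :: "'a \<Rightarrow> real"
  assumes w: "capacity M w" and X: "X \<in> borel_measurable M" and Y: "Y \<in> borel_measurable M"
    and "\<forall>\<omega>\<in>space M. X \<omega> \<le> Y \<omega>"
  shows "LVaR_plus M L w X \<le> LVaR_plus M L w Y"
proof -
  have "wgt M w X x \<le> wgt M w Y x" for x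
    using assms by (intro wgt_mono[OF w Y X]) force
  then show ?thesis
    unfolding LVaR_plus_def by (intro Sup_subset_mono image_mono) (auto intro: order_trans)
qed

lemma LVaR_antimono_Lambda:
  assumes "\<And>x. L1 x \<le> L2 x"
  shows "LVaR M L2 w X \<le> LVaR M L1 w X"
  unfolding LVaR_def using assms
  by (intro Inf_superset_mono image_mono) (auto intro: order_trans)

lemma LVaR_plus_antimono_Lambda:
  assumes "\<And>x. L1 x \<le> L2 x"
  shows "LVaR_plus M L2 w X \<le> LVaR_plus M L1 w X"
  unfolding LVaR_plus_def using assms
  by (intro Sup_subset_mono image_mono) (auto intro: order_trans)

lemma LVaR_const:
  assumes w: "capacity M w" and L: "L \<in> HH"
  shows "LVaR M L w (\<lambda>\<omega>. t) = ereal t"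
proof -
  have "wgt M w (\<lambda>\<omega>. t) x \<le> L x \<longleftrightarrow> t \<le> x" for x
    using HH_D[OF L, of x] by (simp add: wgt_const[OF w])
  then have "{x. wgt M w (\<lambda>\<omega>. t) x \<le> L x} = {t..}"
    by auto
  moreover have "Inf (ereal ` {t..}) = ereal t"
    by (rule antisym) (auto intro: Inf_lower Inf_greatest)
  ultimately show ?thesis
    by (simp add: LVaR_def)
qed

lemma LVaR_plus_const:
  assumes w: "capacity M w" and L: "L \<in> HH"
  shows "LVaR_plus M L w (\<lambda>\<omega>. t) = ereal t"
proof -
  have "L x \<le> wgt M w (\<lambda>\<omega>. t) x \<longleftrightarrow> x < t" for x
    using HH_D[OF L, of x] by (simp add: wgt_const[OF w])
  then have "{x. L x \<le> wgt M w (\<lambda>\<omega>. t) x} = {..<t}"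
    by auto
  moreover have "Sup (ereal ` {..<t}) = ereal t"
  proof (rule antisym)
    show "ereal t \<le> Sup (ereal ` {..<t})"
    proof (rule dense_le)
      fix e assume "e < ereal t"
      then show "e \<le> Sup (ereal ` {..<t})"
        by (cases e) (auto intro: Sup_upper)
    qed
  qed (auto intro: Sup_least)
  ultimately show ?thesis
    by (simp add: LVaR_plus_def)
qed

lemma LVaR_add_const: "LVaR M L w (\<lambda>\<omega>. X \<omega> + m) = LVaR M (\<lambda>x. L (x + m)) w X + ereal m"
proof -
  have "{x. wgt M w (\<lambda>\<omega>. X \<omega> + m) x \<le> L x} = (\<lambda>y. y + m) ` {y. wgt M w X y \<le> L (y + m)}"
    by (auto simp: wgt_add_const image_iff intro!: exI[of _ "x - m" for x])
  then show ?thesis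
    unfolding LVaR_def Inf_add_ereal[symmetric] by (simp add: image_image)
qed

lemma LVaR_plus_add_const:
  "LVaR_plus M L w (\<lambda>\<omega>. X \<omega> + m) = LVaR_plus M (\<lambda>x. L (x + m)) w X + ereal m"
proof -
  have "{x. L x \<le> wgt M w (\<lambda>\<omega>. X \<omega> + m) x} = (\<lambda>y. y + m) ` {y. L (y + m) \<le> wgt M w X y}"
    by (auto simp: wgt_add_const image_iff intro!: exI[of _ "x - m" for x])
  then show ?thesis
    unfolding LVaR_plus_def Sup_add_ereal[symmetric] by (simp add: image_image)
qed

lemma LVaR_cash_subadditive:
  assumes "mono L" "0 \<le> m"
  shows "LVaR M L w (\<lambda>\<omega>. X \<omega> + m) \<le> LVaR M L w X + ereal m"
  unfolding LVaR_add_const using assms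
  by (intro add_right_mono LVaR_antimono_Lambda) (simp add: monoD)

lemma LVaR_plus_cash_subadditive:
  assumes "mono L" "0 \<le> m"
  shows "LVaR_plus M L w (\<lambda>\<omega>. X \<omega> + m) \<le> LVaR_plus M L w X + ereal m"
  unfolding LVaR_plus_add_const using assms
  by (intro add_right_mono LVaR_plus_antimono_Lambda) (simp add: monoD)

lemma LVaR_cash_supadditive:
  assumes "antimono L" "0 \<le> m"
  shows "LVaR M L w X + ereal m \<le> LVaR M L w (\<lambda>\<omega>. X \<omega> + m)"
  unfolding LVaR_add_const using assms
  by (intro add_right_mono LVaR_antimono_Lambda) (simp add: antimonoD)

lemma LVaR_plus_cash_supadditive:
  assumes "antimono L" "0 \<le> m"
  shows "LVaR_plus M L w X + ereal m \<le> LVaR_plus M L w (\<lambda>\<omega>. X \<omega> + m)"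
  unfolding LVaR_plus_add_const using assms
  by (intro add_right_mono LVaR_plus_antimono_Lambda) (simp add: antimonoD)

lemma wgt_mix_le:
  fixes X :: "'a \<Rightarrow> real"
  assumes w: "capacity M w" and X: "X \<in> borel_measurable M"
    and l: "0 \<le> l" "l \<le> 1" and "t \<le> x" "y \<le> x"
  shows "wgt M w (\<lambda>\<omega>. l * X \<omega> + (1 - l) * t) x \<le> wgt M w X y"
proof (rule wgt_mono[OF w X])
  show "(\<lambda>\<omega>. l * X \<omega> + (1 - l) * t) \<in> borel_measurable M"
    by (intro borel_measurable_add borel_measurable_times borel_measurable_const X)
  fix \<omega> assume "x < l * X \<omega> + (1 - l) * t"
  then have "x < X \<omega>"
    using convex_bound_le[of "X \<omega>" x t l "1 - l"] l \<open>t \<le> x\<close> by linarith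
  with \<open>y \<le> x\<close> show "y < X \<omega>"
    by linarith
qed

lemma LVaR_quasi_star_shaped:
  fixes X :: "'a \<Rightarrow> real"
  assumes w: "capacity M w" and L: "L \<in> HH" and "mono L" and X: "X \<in> borel_measurable M"
    and l: "0 \<le> l" "l \<le> 1"
  shows "LVaR M L w (\<lambda>\<omega>. l * X \<omega> + (1 - l) * t) \<le> max (LVaR M L w X) (LVaR M L w (\<lambda>\<omega>. t))"
  unfolding LVaR_const[OF w L]
proof (rule ereal_le_real_strict)
  fix x assume "max (LVaR M L w X) (ereal t) < ereal x"
  then obtain y where "y < x" "wgt M w X y \<le> L y" and "t < x"
    by (auto simp: LVaR_less_iff)
  have "wgt M w (\<lambda>\<omega>. l * X \<omega> + (1 - l) * t) x \<le> wgt M w X y"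
    using \<open>y < x\<close> \<open>t < x\<close> by (intro wgt_mix_le[OF w X l]) simp_all
  also have "\<dots> \<le> L y" by fact
  also have "\<dots> \<le> L x"
    using \<open>mono L\<close> \<open>y < x\<close> by (simp add: monoD)
  finally show "LVaR M L w (\<lambda>\<omega>. l * X \<omega> + (1 - l) * t) \<le> ereal x"
    by (rule LVaR_le)
qed

lemma LVaR_plus_quasi_star_shaped:
  fixes X :: "'a \<Rightarrow> real"
  assumes w: "capacity M w" and L: "L \<in> HH" and X: "X \<in> borel_measurable M"
    and l: "0 \<le> l" "l \<le> 1"
  shows "LVaR_plus M L w (\<lambda>\<omega>. l * X \<omega> + (1 - l) * t)
    \<le> max (LVaR_plus M L w X) (LVaR_plus M L w (\<lambda>\<omega>. t))"
proof -
  have "ereal x \<le> max (LVaR_plus M L w X) (ereal t)"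
    if "L x \<le> wgt M w (\<lambda>\<omega>. l * X \<omega> + (1 - l) * t) x" for x
  proof (cases "x < t")
    case False
    then have "L x \<le> wgt M w X x"
      using that wgt_mix_le[OF w X l, of t x x] by simp
    then show ?thesis
      by (simp add: le_LVaR_plus le_max_iff_disj)
  qed (simp add: le_max_iff_disj)
  then show ?thesis
    unfolding LVaR_plus_const[OF w L] LVaR_plus_def[of M L w "\<lambda>\<omega>. l * X \<omega> + (1 - l) * t"]
    by (auto intro: Sup_least)
qed

theorem mainTheorem1:
  fixes M :: "'a measure" and w :: "'a set \<Rightarrow> real" and XX :: "('a \<Rightarrow> real) set"
    and L L1 L2 :: "real \<Rightarrow> real"
  assumes XX: "admissible_rv_set M XX"
    and w: "capacity M w"
    and L: "L \<in> HH" and L1: "L1 \<in> HH" and L2: "L2 \<in> HH"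
  shows
    \<comment> \<open>(i)\<close>
    "(\<forall>X\<in>XX. \<forall>Y\<in>XX. (\<forall>\<omega>\<in>space M. X \<omega> \<le> Y \<omega>) \<longrightarrow>
        LVaR M L w X \<le> LVaR M L w Y \<and> LVaR_plus M L w X \<le> LVaR_plus M L w Y)
     \<and> (\<forall>X\<in>XX. LVaR M L w X \<le> LVaR_plus M L w X)
     \<comment> \<open>(ii)\<close>
     \<and> ((\<forall>x. L1 x \<le> L2 x) \<longrightarrow>
        (\<forall>X\<in>XX. LVaR M L1 w X \<ge> LVaR M L2 w X \<and> LVaR_plus M L1 w X \<ge> LVaR_plus M L2 w X))
     \<comment> \<open>(iii)\<close>
     \<and> (mono L \<longrightarrow>
        (\<forall>X\<in>XX. \<forall>t::real. \<forall>l::real. 0 \<le> l \<and> l \<le> 1 \<longrightarrow>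
           LVaR M L w (\<lambda>\<omega>. l * X \<omega> + (1 - l) * t)
             \<le> max (LVaR M L w X) (LVaR M L w (\<lambda>\<omega>. t)) \<and>
           LVaR_plus M L w (\<lambda>\<omega>. l * X \<omega> + (1 - l) * t)
             \<le> max (LVaR_plus M L w X) (LVaR_plus M L w (\<lambda>\<omega>. t))))
     \<comment> \<open>(iv)\<close>
     \<and> (mono L \<longrightarrow>
        (\<forall>X\<in>XX. \<forall>m::real. 0 \<le> m \<longrightarrow>
           LVaR M L w (\<lambda>\<omega>. X \<omega> + m) \<le> LVaR M L w X + ereal m \<and>
           LVaR_plus M L w (\<lambda>\<omega>. X \<omega> + m) \<le> LVaR_plus M L w X + ereal m))
     \<and> (antimono L \<longrightarrow>
        (\<forall>X\<in>XX. \<forall>m::real. 0 \<le> m \<longrightarrow>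
           LVaR M L w (\<lambda>\<omega>. X \<omega> + m) \<ge> LVaR M L w X + ereal m \<and>
           LVaR_plus M L w (\<lambda>\<omega>. X \<omega> + m) \<ge> LVaR_plus M L w X + ereal m))"
proof -
  have meas: "X \<in> borel_measurable M" if "X \<in> XX" for X
    using XX that unfolding admissible_rv_set_def by blast
  show ?thesis
    using meas
    by (auto simp: LVaR_le_LVaR_plus LVaR_antimono_Lambda LVaR_plus_antimono_Lambda
        LVaR_mono[OF w] LVaR_plus_mono[OF w]
        LVaR_quasi_star_shaped[OF w L] LVaR_plus_quasi_star_shaped[OF w L]
        LVaR_cash_subadditive LVaR_plus_cash_subadditive
        LVaR_cash_supadditive LVaR_plus_cash_supadditive)
qed

end
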